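(* Assume nondegeneracy. Then $\mathcal{B}^*$ has at most $M!$ extreme points.
   Context: Let $M\ge1$. Let $X_1,\dots,X_M,S$ be random variables on finite alphabets with joint pmf $p(x_1,\dots,x_M,s)$, and for each $1\le k\le M$ let $q_k(z_k|x_k)$ be a fixed conditional pmf on a finite alphabet $\mathcal Z_k$, so that $(X_1,\dots,X_M,S,Z_1,\dots,Z_M)$ has joint pmf $p(x_1,\dots,x_M,s)\prod_{k=1}^M q_k(z_k|x_k)$. For $A\subseteq\{1,\dots,M\}$ write $X_A=(X_i)_{i\in A}$, $Z_A=(Z_i)_{i\in A}$ ($Z_\emptyset$ is a constant), and $I^c=\{1,\dots,M\}\setminus I$. Define $\mathcal{B}^*$ as the set of $(R_1,\dots,R_M)\in\mathbb{R}^M$ with $I(X_I;Z_I\mid Z_{I^c},S)\le\sum_{i\in I}R_i$ for every nonempty $I\subseteq\{1,\dots,M\}$. Nondegeneracy means: for all disjoint nonempty $I,I'\subseteq\{1,\dots,M\}$, $I(Z_I;Z_{I'}\mid Z_{(I\cup I')^c},S)>0$. *)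

theory Defs
  imports "HOL-Analysis.Analysis"
begin

text \<open>Discrete probability on a finite outcome set Omega with weights P.
  The marginal pmf of a random variable A (a function on outcomes).\<close>
definition rv_pmf :: "'w set \<Rightarrow> ('w \<Rightarrow> real) \<Rightarrow> ('w \<Rightarrow> 'a) \<Rightarrow> 'a \<Rightarrow> real" where
  "rv_pmf Omega P A a = (\<Sum>w\<in>{w\<in>Omega. A w = a}. P w)"

text \<open>Conditional mutual information I(A;B|C) in bits, with the convention 0 log 0 = 0.\<close>
definition cond_mutual_info ::
  "'w set \<Rightarrow> ('w \<Rightarrow> real) \<Rightarrow> ('w \<Rightarrow> 'a) \<Rightarrow> ('w \<Rightarrow> 'b) \<Rightarrow> ('w \<Rightarrow> 'c) \<Rightarrow> real" where
  "cond_mutual_info Omega P A B C =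
     (\<Sum>t\<in>(\<lambda>w. (A w, B w, C w)) ` Omega.
        (case t of (a, b, c) \<Rightarrow>
          (let pabc = rv_pmf Omega P (\<lambda>w. (A w, B w, C w)) (a, b, c);
               pc = rv_pmf Omega P C c;
               pac = rv_pmf Omega P (\<lambda>w. (A w, C w)) (a, c);
               pbc = rv_pmf Omega P (\<lambda>w. (B w, C w)) (b, c)
           in if pabc = 0 then 0 else pabc * log 2 ((pabc * pc) / (pac * pbc)))))"

text \<open>Outcome space of (X_1..X_M, S, Z_1..Z_M); indices are the elements of the finite type 'n.\<close>
definition outcomes :: "('n \<Rightarrow> 'x set) \<Rightarrow> 's set \<Rightarrow> ('n \<Rightarrow> 'z set) \<Rightarrow> (('n \<Rightarrow> 'x) \<times> 's \<times> ('n \<Rightarrow> 'z)) set" where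
  "outcomes XA SA ZA = {(x, s, z). (\<forall>i. x i \<in> XA i) \<and> s \<in> SA \<and> (\<forall>i. z i \<in> ZA i)}"

definition joint_pmf :: "(('n::finite \<Rightarrow> 'x) \<Rightarrow> 's \<Rightarrow> real) \<Rightarrow> ('n \<Rightarrow> 'x \<Rightarrow> 'z \<Rightarrow> real)
    \<Rightarrow> ('n \<Rightarrow> 'x) \<times> 's \<times> ('n \<Rightarrow> 'z) \<Rightarrow> real" where
  "joint_pmf p q = (\<lambda>(x, s, z). p x s * (\<Prod>k\<in>UNIV. q k (x k) (z k)))"

text \<open>Random variables X_I, Z_I, S on the outcome space (Z_{} is constant).\<close>
definition X_rv :: "'n set \<Rightarrow> ('n \<Rightarrow> 'x) \<times> 's \<times> ('n \<Rightarrow> 'z) \<Rightarrow> ('n \<Rightarrow> 'x)" where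
  "X_rv I = (\<lambda>(x, s, z). restrict x I)"
definition Z_rv :: "'n set \<Rightarrow> ('n \<Rightarrow> 'x) \<times> 's \<times> ('n \<Rightarrow> 'z) \<Rightarrow> ('n \<Rightarrow> 'z)" where
  "Z_rv I = (\<lambda>(x, s, z). restrict z I)"
definition S_rv :: "('n \<Rightarrow> 'x) \<times> 's \<times> ('n \<Rightarrow> 'z) \<Rightarrow> 's" where
  "S_rv = (\<lambda>(x, s, z). s)"

definition B_star :: "('n::finite \<Rightarrow> 'x set) \<Rightarrow> 's set \<Rightarrow> ('n \<Rightarrow> 'z set)
    \<Rightarrow> (('n \<Rightarrow> 'x) \<Rightarrow> 's \<Rightarrow> real) \<Rightarrow> ('n \<Rightarrow> 'x \<Rightarrow> 'z \<Rightarrow> real) \<Rightarrow> (real^'n) set" where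
  "B_star XA SA ZA p q = {R. \<forall>I. I \<noteq> {} \<longrightarrow>
      cond_mutual_info (outcomes XA SA ZA) (joint_pmf p q) (X_rv I) (Z_rv I)
        (\<lambda>w. (Z_rv (- I) w, S_rv w)) \<le> (\<Sum>i\<in>I. R $ i)}"

definition nondegenerate :: "('n::finite \<Rightarrow> 'x set) \<Rightarrow> 's set \<Rightarrow> ('n \<Rightarrow> 'z set)
    \<Rightarrow> (('n \<Rightarrow> 'x) \<Rightarrow> 's \<Rightarrow> real) \<Rightarrow> ('n \<Rightarrow> 'x \<Rightarrow> 'z \<Rightarrow> real) \<Rightarrow> bool" where
  "nondegenerate XA SA ZA p q \<longleftrightarrow> (\<forall>I I'. I \<noteq> {} \<longrightarrow> I' \<noteq> {} \<longrightarrow> I \<inter> I' = {} \<longrightarrow>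
      cond_mutual_info (outcomes XA SA ZA) (joint_pmf p q) (Z_rv I) (Z_rv I')
        (\<lambda>w. (Z_rv (- (I \<union> I')) w, S_rv w)) > 0)"

end

theory Submission
  imports Defs "HOL-Combinatorics.Multiset_Permutations"
begin

(* The bound I(X_I;Z_I|Z_{I^c},S) =: F(I) defining the region B* is a supermodular set function
   with F({}) = 0, and for every such F the region {R. F(I) <= sum_{i in I} R_i for all I}
   has at most M! extreme points.

   1. Information theory on a finite outcome space: writing n(T) = sum_w P(w) ln p_T(T(w))
      for the negative entropy of T (in nats), conditional mutual information is
      (n(ABC) + n(C) - n(AC) - n(BC)) / ln 2, and n(AC) + n(BC) <= n(ABC) + n(C)
      (nonnegativity of conditional mutual information, via ln x <= x - 1).
   2. In the channel model, Z_I depends on X only through X_I, so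
      F(I) = (sum_{i in I} c_i + n(Z_{I^c},S) - n(Z,S)) / ln 2 with constants c_i.
      Hence F is modular plus a supermodular function of I^c, i.e. supermodular.
   3. For supermodular F the sets on which a point v of the region is tight form a lattice.
      At an extreme point this lattice covers and separates all indices, so it contains a
      maximal chain, i.e. all prefixes of some ordering of the indices; the tight equations
      along that chain determine v. Mapping each extreme point to such an ordering is injective. *)

definition neg_entropy :: "'w set \<Rightarrow> ('w \<Rightarrow> real) \<Rightarrow> ('w \<Rightarrow> 'a) \<Rightarrow> real" where
  "neg_entropy Om P T = (\<Sum>w\<in>Om. P w * ln (rv_pmf Om P T (T w)))"

lemma rv_pmf_nonneg:
  "finite Om \<Longrightarrow> (\<And>w. w \<in> Om \<Longrightarrow> P w \<ge> 0) \<Longrightarrow> rv_pmf Om P T a \<ge> 0"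
  unfolding rv_pmf_def by (intro sum_nonneg) auto

lemma rv_pmf_ge:
  "finite Om \<Longrightarrow> (\<And>w. w \<in> Om \<Longrightarrow> P w \<ge> 0) \<Longrightarrow> w \<in> Om \<Longrightarrow> P w \<le> rv_pmf Om P T (T w)"
  unfolding rv_pmf_def by (rule member_le_sum) auto

lemma rv_pmf_pos:
  assumes "finite Om" "\<And>w. w \<in> Om \<Longrightarrow> P w \<ge> 0" "w \<in> Om" "P w > 0"
  shows "rv_pmf Om P T (T w) > 0"
proof -
  have "P w \<le> rv_pmf Om P T (T w)" by (rule rv_pmf_ge) (use assms in auto)
  thus ?thesis using assms(4) by linarith
qed

lemma fiber_sum:
  assumes "finite Om"
  shows "(\<Sum>t\<in>T ` Om. rv_pmf Om P T t * g t) = (\<Sum>w\<in>Om. P w * g (T w))"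
proof -
  have "(\<Sum>t\<in>T ` Om. rv_pmf Om P T t * g t) = (\<Sum>t\<in>T ` Om. \<Sum>w\<in>{w\<in>Om. T w = t}. P w * g (T w))"
    unfolding rv_pmf_def sum_distrib_right by (intro sum.cong refl) auto
  also have "\<dots> = (\<Sum>w\<in>Om. P w * g (T w))"
    using assms by (intro sum.group) auto
  finally show ?thesis .
qed

lemma rv_pmf_marginal:
  assumes "finite Om"
  shows "(\<Sum>a\<in>A ` Om. rv_pmf Om P (\<lambda>w. (A w, C w)) (a, c)) = rv_pmf Om P C c"
proof -
  have "(\<Sum>a\<in>A ` Om. rv_pmf Om P (\<lambda>w. (A w, C w)) (a, c))
      = (\<Sum>a\<in>A ` Om. \<Sum>w\<in>{w\<in>{w\<in>Om. C w = c}. A w = a}. P w)"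
    unfolding rv_pmf_def by (intro sum.cong refl arg_cong[where f="sum P"]) auto
  also have "\<dots> = rv_pmf Om P C c"
    unfolding rv_pmf_def using assms by (intro sum.group) auto
  finally show ?thesis .
qed

lemma neg_entropy_cong:
  assumes "\<And>w1 w2. w1 \<in> Om \<Longrightarrow> w2 \<in> Om \<Longrightarrow> T w1 = T w2 \<longleftrightarrow> U w1 = U w2"
  shows "neg_entropy Om P T = neg_entropy Om P U"
  unfolding neg_entropy_def rv_pmf_def
proof (intro sum.cong refl)
  fix w assume w: "w \<in> Om"
  have "{w'\<in>Om. T w' = T w} = {w'\<in>Om. U w' = U w}" using assms w by auto
  thus "P w * ln (sum P {w' \<in> Om. T w' = T w}) = P w * ln (sum P {w' \<in> Om. U w' = U w})" by simp
qed

lemma cond_mutual_info_entropies: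
  assumes fin: "finite Om" and nn: "\<And>w. w \<in> Om \<Longrightarrow> P w \<ge> 0"
  shows "cond_mutual_info Om P A B C =
    (neg_entropy Om P (\<lambda>w. (A w, B w, C w)) + neg_entropy Om P C
     - neg_entropy Om P (\<lambda>w. (A w, C w)) - neg_entropy Om P (\<lambda>w. (B w, C w))) / ln 2"
proof -
  define T where "T = (\<lambda>w. (A w, B w, C w))"
  define pabc where "pabc = rv_pmf Om P T"
  define pac where "pac = rv_pmf Om P (\<lambda>w. (A w, C w))"
  define pbc where "pbc = rv_pmf Om P (\<lambda>w. (B w, C w))"
  define pc where "pc = rv_pmf Om P C"
  define g where "g = (\<lambda>(a, b, c).
     if pabc (a, b, c) = 0 then 0 else log 2 ((pabc (a, b, c) * pc c) / (pac (a, c) * pbc (b, c))))"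
  have "cond_mutual_info Om P A B C = (\<Sum>t\<in>T ` Om. pabc t * g t)"
    unfolding cond_mutual_info_def T_def g_def pabc_def pac_def pbc_def pc_def
    by (intro sum.cong refl) (auto simp: Let_def)
  also have "\<dots> = (\<Sum>w\<in>Om. P w * g (T w))"
    unfolding pabc_def by (rule fiber_sum[OF fin])
  also have "\<dots> = (\<Sum>w\<in>Om. (P w * ln (pabc (T w)) + P w * ln (pc (C w))
       - P w * ln (pac (A w, C w)) - P w * ln (pbc (B w, C w))) / ln 2)"
  proof (intro sum.cong refl)
    fix w assume w: "w \<in> Om"
    show "P w * g (T w) = (P w * ln (pabc (T w)) + P w * ln (pc (C w))
       - P w * ln (pac (A w, C w)) - P w * ln (pbc (B w, C w))) / ln 2"
    proof (cases "P w = 0")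
      case False
      hence pos: "P w > 0" using nn[OF w] by simp
      have p: "rv_pmf Om P U (U w) > 0" for U :: "_ \<Rightarrow> 'u"
        by (rule rv_pmf_pos[where P=P, OF fin nn w pos])
      have "pabc (T w) > 0" "pc (C w) > 0" "pac (A w, C w) > 0" "pbc (B w, C w) > 0"
        using p[of T] p[of C] p[of "\<lambda>w. (A w, C w)"] p[of "\<lambda>w. (B w, C w)"]
        by (simp_all add: pabc_def pc_def pac_def pbc_def)
      thus ?thesis
        by (simp add: g_def T_def log_def ln_mult ln_div algebra_simps diff_divide_distrib add_divide_distrib)
    qed simp
  qed
  also have "\<dots> = (neg_entropy Om P T + neg_entropy Om P C
      - neg_entropy Om P (\<lambda>w. (A w, C w)) - neg_entropy Om P (\<lambda>w. (B w, C w))) / ln 2"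
    unfolding neg_entropy_def sum_divide_distrib[symmetric] sum.distrib sum_subtractf
    by (simp add: pabc_def pc_def pac_def pbc_def)
  finally show ?thesis by (simp add: T_def)
qed

(* The key estimate behind I(A;B|C) >= 0: the expectation of p(a,c) p(b,c) / (p(a,b,c) p(c))
   is at most the total mass. *)
lemma cmi_ratio_bound:
  fixes A :: "'w \<Rightarrow> 'a" and B :: "'w \<Rightarrow> 'b" and C :: "'w \<Rightarrow> 'c"
  assumes fin: "finite Om" and nn: "\<And>w. w \<in> Om \<Longrightarrow> P w \<ge> 0"
  defines "pabc \<equiv> rv_pmf Om P (\<lambda>w. (A w, B w, C w))"
      and "pac \<equiv> rv_pmf Om P (\<lambda>w. (A w, C w))"
      and "pbc \<equiv> rv_pmf Om P (\<lambda>w. (B w, C w))"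
      and "pc \<equiv> rv_pmf Om P C"
  shows "(\<Sum>w\<in>Om. P w * (pac (A w, C w) * pbc (B w, C w) / (pabc (A w, B w, C w) * pc (C w))))
          \<le> (\<Sum>w\<in>Om. P w)"
proof -
  define T where "T = (\<lambda>w. (A w, B w, C w))"
  define BC where "BC = (\<lambda>w. (B w, C w))"
  define K where "K = (\<lambda>(a, b, c). pac (a, c) * pbc (b, c) / pc c)"
  have nnp: "rv_pmf Om P U x \<ge> 0" for U :: "'w \<Rightarrow> 'u" and x
    by (rule rv_pmf_nonneg[OF fin nn])
  have K_nonneg: "K t \<ge> 0" for t
    by (auto simp: K_def pac_def pbc_def pc_def nnp split: prod.split)
  define H where "H = (\<lambda>(a, b, c). pac (a, c) * pbc (b, c) / (pabc (a, b, c) * pc c))"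
  have "(\<Sum>w\<in>Om. P w * (pac (A w, C w) * pbc (B w, C w) / (pabc (A w, B w, C w) * pc (C w))))
      = (\<Sum>w\<in>Om. P w * H (T w))" by (simp add: H_def T_def)
  also have "\<dots> = (\<Sum>t\<in>T ` Om. pabc t * H t)"
    unfolding pabc_def T_def by (rule fiber_sum[OF fin, symmetric])
  \<comment> \<open>where p(a,b,c) > 0 the weighted ratio is exactly K(a,b,c)\<close>
  also have "\<dots> \<le> (\<Sum>t\<in>T ` Om. K t)"
    using K_nonneg by (intro sum_mono) (auto simp: K_def H_def split: prod.split)
  \<comment> \<open>enlarge the support of (A, B, C) to the product of the supports of A and (B, C)\<close>
  also have "\<dots> \<le> (\<Sum>t\<in>A ` Om \<times> BC ` Om. K t)"
    using fin K_nonneg by (intro sum_mono2) (auto simp: T_def BC_def)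
  also have "\<dots> = (\<Sum>bc\<in>BC ` Om. \<Sum>a\<in>A ` Om. K (a, bc))"
    by (subst sum.swap) (simp add: sum.cartesian_product)
  also have "\<dots> = (\<Sum>(b, c)\<in>BC ` Om. pbc (b, c) / pc c * (\<Sum>a\<in>A ` Om. pac (a, c)))"
    by (intro sum.cong refl) (auto simp: K_def sum_distrib_left mult.commute)
  also have "\<dots> = (\<Sum>(b, c)\<in>BC ` Om. pbc (b, c) / pc c * pc c)"
    by (simp add: pac_def pc_def rv_pmf_marginal[OF fin])
  also have "\<dots> \<le> (\<Sum>(b, c)\<in>BC ` Om. pbc (b, c))"
    by (intro sum_mono) (auto simp: pbc_def nnp)
  also have "\<dots> = (\<Sum>w\<in>Om. P w)"
    using fiber_sum[OF fin, where T=BC and P=P and g="\<lambda>_. 1"] by (simp add: pbc_def BC_def case_prod_unfold)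
  finally show ?thesis .
qed

(* Nonnegativity of conditional mutual information: H(ABC) + H(C) <= H(AC) + H(BC). *)
lemma neg_entropy_supermodular:
  fixes A :: "'w \<Rightarrow> 'a" and B :: "'w \<Rightarrow> 'b" and C :: "'w \<Rightarrow> 'c"
  assumes fin: "finite Om" and nn: "\<And>w. w \<in> Om \<Longrightarrow> P w \<ge> 0"
  shows "neg_entropy Om P (\<lambda>w. (A w, C w)) + neg_entropy Om P (\<lambda>w. (B w, C w))
       \<le> neg_entropy Om P (\<lambda>w. (A w, B w, C w)) + neg_entropy Om P C"
proof -
  define pabc where "pabc = rv_pmf Om P (\<lambda>w. (A w, B w, C w))"
  define pac where "pac = rv_pmf Om P (\<lambda>w. (A w, C w))"
  define pbc where "pbc = rv_pmf Om P (\<lambda>w. (B w, C w))"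
  define pc where "pc = rv_pmf Om P C"
  define r where "r = (\<lambda>w. pac (A w, C w) * pbc (B w, C w) / (pabc (A w, B w, C w) * pc (C w)))"
  have "neg_entropy Om P (\<lambda>w. (A w, C w)) + neg_entropy Om P (\<lambda>w. (B w, C w))
      - neg_entropy Om P (\<lambda>w. (A w, B w, C w)) - neg_entropy Om P C
     = (\<Sum>w\<in>Om. P w * (ln (pac (A w, C w)) + ln (pbc (B w, C w)) - ln (pabc (A w, B w, C w)) - ln (pc (C w))))"
    unfolding neg_entropy_def pac_def pbc_def pabc_def pc_def
    by (simp add: distrib_left right_diff_distrib sum.distrib sum_subtractf)
  also have "\<dots> \<le> (\<Sum>w\<in>Om. P w * (r w - 1))"
  proof (intro sum_mono)
    fix w assume w: "w \<in> Om"
    show "P w * (ln (pac (A w, C w)) + ln (pbc (B w, C w)) - ln (pabc (A w, B w, C w)) - ln (pc (C w)))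
        \<le> P w * (r w - 1)"
    proof (cases "P w = 0")
      case False
      hence pos: "P w > 0" using nn[OF w] by simp
      have p: "rv_pmf Om P U (U w) > 0" for U :: "_ \<Rightarrow> 'u"
        by (rule rv_pmf_pos[where P=P, OF fin nn w pos])
      have "pabc (A w, B w, C w) > 0" "pc (C w) > 0" "pac (A w, C w) > 0" "pbc (B w, C w) > 0"
        using p[of "\<lambda>w. (A w, B w, C w)"] p[of C] p[of "\<lambda>w. (A w, C w)"] p[of "\<lambda>w. (B w, C w)"]
        by (simp_all add: pabc_def pc_def pac_def pbc_def)
      hence "r w > 0" and ln_r: "ln (r w) = ln (pac (A w, C w)) + ln (pbc (B w, C w)) - ln (pabc (A w, B w, C w)) - ln (pc (C w))"
        by (simp_all add: r_def ln_mult ln_div)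
      have "ln (r w) \<le> r w - 1" using \<open>r w > 0\<close> by (rule ln_le_minus_one)
      thus ?thesis using pos unfolding ln_r by (intro mult_left_mono) auto
    qed simp
  qed
  also have "\<dots> = (\<Sum>w\<in>Om. P w * r w) - (\<Sum>w\<in>Om. P w)"
    by (simp add: algebra_simps sum_subtractf)
  also have "\<dots> \<le> 0"
    using cmi_ratio_bound[OF fin nn, where A=A and B=B and C=C]
    by (simp add: r_def pac_def pbc_def pabc_def pc_def)
  finally show ?thesis by simp
qed

lemma restrict_eq_iff: "restrict f A = restrict g A \<longleftrightarrow> (\<forall>i\<in>A. f i = g i)"
  by (auto simp: restrict_def fun_eq_iff)

lemma outcomes_eq: "outcomes XA SA ZA = PiE UNIV XA \<times> (SA \<times> PiE UNIV ZA)"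
  by (auto simp: outcomes_def PiE_iff)

lemma Z_rv_eq: "Z_rv J w1 = Z_rv J w2 \<longleftrightarrow> (\<forall>i\<in>J. snd (snd w1) i = snd (snd w2) i)"
  by (simp add: Z_rv_def case_prod_unfold restrict_eq_iff)

locale channel_model =
  fixes XA :: "'n::finite \<Rightarrow> 'x set" and SA :: "'s set" and ZA :: "'n \<Rightarrow> 'z set"
    and p :: "('n \<Rightarrow> 'x) \<Rightarrow> 's \<Rightarrow> real" and q :: "'n \<Rightarrow> 'x \<Rightarrow> 'z \<Rightarrow> real"
  assumes fin_X: "\<And>i. finite (XA i)" and fin_S: "finite SA" and fin_Z: "\<And>i. finite (ZA i)"
    and p_nonneg: "\<And>x s. (\<forall>i. x i \<in> XA i) \<Longrightarrow> s \<in> SA \<Longrightarrow> p x s \<ge> 0"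
    and q_nonneg: "\<And>k x z. x \<in> XA k \<Longrightarrow> z \<in> ZA k \<Longrightarrow> q k x z \<ge> 0"
    and q_sum: "\<And>k x. x \<in> XA k \<Longrightarrow> (\<Sum>z\<in>ZA k. q k x z) = 1"
begin

abbreviation "Om \<equiv> outcomes XA SA ZA"
abbreviation "P \<equiv> joint_pmf p q"

lemma fin_Om: "finite Om"
  unfolding outcomes_eq using fin_X fin_S fin_Z by (intro finite_cartesian_product finite_PiE) auto

lemma P_nonneg: "w \<in> Om \<Longrightarrow> P w \<ge> 0"
  by (auto simp: outcomes_def joint_pmf_def intro!: mult_nonneg_nonneg p_nonneg prod_nonneg q_nonneg)

definition cmi_bound :: "'n set \<Rightarrow> real" where
  "cmi_bound I = cond_mutual_info Om P (X_rv I) (Z_rv I) (\<lambda>w. (Z_rv (- I) w, S_rv w))"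

definition neg_ent_ZS :: "'n set \<Rightarrow> real" where
  "neg_ent_ZS J = neg_entropy Om P (\<lambda>w. (Z_rv J w, S_rv w))"

definition channel_log_mean :: "'n \<Rightarrow> real" where
  "channel_log_mean i = (\<Sum>w\<in>Om. P w * ln (q i (fst w i) (snd (snd w) i)))"

definition inputs_agreeing :: "('n \<Rightarrow> 'x) \<Rightarrow> 'n set \<Rightarrow> ('n \<Rightarrow> 'x) set" where
  "inputs_agreeing x0 I = {x \<in> PiE UNIV XA. \<forall>i\<in>I. x i = x0 i}"

lemma pmf_X_Z_S:
  assumes w: "(x0, s0, z0) \<in> Om"
  shows "rv_pmf Om P (\<lambda>w. (X_rv I w, Z_rv I w, (Z_rv (- I) w, S_rv w)))
           (restrict x0 I, restrict z0 I, (restrict z0 (-I), s0))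
       = (\<Sum>x\<in>inputs_agreeing x0 I. p x s0 * (\<Prod>k\<in>UNIV. q k (x k) (z0 k)))"
proof -
  have x0: "\<forall>i. x0 i \<in> XA i" and s0: "s0 \<in> SA" and z0: "\<forall>i. z0 i \<in> ZA i"
    using w by (auto simp: outcomes_def)
  have "{w \<in> Om. (X_rv I w, Z_rv I w, (Z_rv (- I) w, S_rv w))
                   = (restrict x0 I, restrict z0 I, (restrict z0 (-I), s0))}
      = (\<lambda>x. (x, s0, z0)) ` inputs_agreeing x0 I"
  proof (intro set_eqI iffI)
    fix w assume "w \<in> {w \<in> Om. (X_rv I w, Z_rv I w, (Z_rv (- I) w, S_rv w))
                   = (restrict x0 I, restrict z0 I, (restrict z0 (-I), s0))}"
    then obtain x s z where wd: "w = (x, s, z)" "(x, s, z) \<in> Om" "restrict x I = restrict x0 I"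
       "restrict z I = restrict z0 I" "restrict z (-I) = restrict z0 (-I)" "s = s0"
      by (cases w) (auto simp: X_rv_def Z_rv_def S_rv_def)
    hence "z = z0" unfolding restrict_eq_iff by (metis ComplI ext)
    with wd show "w \<in> (\<lambda>x. (x, s0, z0)) ` inputs_agreeing x0 I"
      by (auto simp: inputs_agreeing_def restrict_eq_iff outcomes_def PiE_iff)
  qed (use x0 s0 z0 in \<open>auto simp: inputs_agreeing_def X_rv_def Z_rv_def S_rv_def outcomes_def
         PiE_iff restrict_eq_iff\<close>)
  note preimage = this
  show ?thesis
    unfolding rv_pmf_def preimage by (subst sum.reindex) (auto simp: inj_on_def joint_pmf_def)
qed

(* The pmf of (X_I, Z_{I^c}, S): the channels in I are summed out using their normalisation. *)
lemma pmf_X_Zc_S: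
  assumes w: "(x0, s0, z0) \<in> Om"
  shows "rv_pmf Om P (\<lambda>w. (X_rv I w, (Z_rv (- I) w, S_rv w))) (restrict x0 I, (restrict z0 (-I), s0))
       = (\<Sum>x\<in>inputs_agreeing x0 I. p x s0 * (\<Prod>k\<in>-I. q k (x k) (z0 k)))"
proof -
  define ZI where "ZI = PiE UNIV (\<lambda>k. if k \<in> I then ZA k else {z0 k})"
  have x0: "\<forall>i. x0 i \<in> XA i" and s0: "s0 \<in> SA" and z0: "\<forall>i. z0 i \<in> ZA i"
    using w by (auto simp: outcomes_def)
  have "{w \<in> Om. (X_rv I w, (Z_rv (- I) w, S_rv w)) = (restrict x0 I, (restrict z0 (-I), s0))}
      = (\<lambda>(x, z). (x, s0, z)) ` (inputs_agreeing x0 I \<times> ZI)"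
  proof (intro set_eqI iffI)
    fix w assume "w \<in> {w \<in> Om. (X_rv I w, (Z_rv (- I) w, S_rv w)) = (restrict x0 I, (restrict z0 (-I), s0))}"
    then obtain x s z where "w = (x, s, z)" "(x, s, z) \<in> Om" "restrict x I = restrict x0 I"
       "restrict z (-I) = restrict z0 (-I)" "s = s0"
      by (cases w) (auto simp: X_rv_def Z_rv_def S_rv_def)
    thus "w \<in> (\<lambda>(x, z). (x, s0, z)) ` (inputs_agreeing x0 I \<times> ZI)"
      by (auto simp: inputs_agreeing_def ZI_def restrict_eq_iff outcomes_def PiE_iff image_iff)
  qed (use x0 s0 z0 in \<open>auto simp: inputs_agreeing_def ZI_def X_rv_def Z_rv_def S_rv_def outcomes_def
         PiE_iff restrict_eq_iff split: if_splits; metis\<close>)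
  note preimage = this
  have "rv_pmf Om P (\<lambda>w. (X_rv I w, (Z_rv (- I) w, S_rv w))) (restrict x0 I, (restrict z0 (-I), s0))
       = (\<Sum>x\<in>inputs_agreeing x0 I. p x s0 * (\<Sum>z\<in>ZI. \<Prod>k\<in>UNIV. q k (x k) (z k)))"
    unfolding rv_pmf_def preimage
    by (subst sum.reindex) (auto simp: inj_on_def joint_pmf_def case_prod_unfold
        sum.cartesian_product' sum_distrib_left)
  also have "\<dots> = (\<Sum>x\<in>inputs_agreeing x0 I. p x s0 * (\<Prod>k\<in>-I. q k (x k) (z0 k)))"
  proof (intro sum.cong refl arg_cong[where f="\<lambda>t. p _ s0 * t"])
    fix x assume x: "x \<in> inputs_agreeing x0 I"
    have "(\<Sum>z\<in>ZI. \<Prod>k\<in>UNIV. q k (x k) (z k))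
        = (\<Prod>k\<in>UNIV. \<Sum>y\<in>(if k \<in> I then ZA k else {z0 k}). q k (x k) y)"
      unfolding ZI_def by (rule prod_sum_PiE[symmetric]) (auto intro: fin_Z)
    also have "\<dots> = (\<Prod>k\<in>UNIV. if k \<in> I then 1 else q k (x k) (z0 k))"
      using x q_sum x0 by (intro prod.cong refl) (auto simp: inputs_agreeing_def PiE_iff)
    also have "\<dots> = (\<Prod>k\<in>-I. q k (x k) (z0 k))"
      by (simp add: prod.If_cases Compl_eq_Diff_UNIV)
    finally show "(\<Sum>z\<in>ZI. \<Prod>k\<in>UNIV. q k (x k) (z k)) = (\<Prod>k\<in>-I. q k (x k) (z0 k))" .
  qed
  finally show ?thesis .
qed

lemma markov_factorization:
  assumes w: "(x0, s0, z0) \<in> Om"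
  shows "rv_pmf Om P (\<lambda>w. (X_rv I w, Z_rv I w, (Z_rv (- I) w, S_rv w)))
           (restrict x0 I, restrict z0 I, (restrict z0 (-I), s0))
       = (\<Prod>k\<in>I. q k (x0 k) (z0 k)) *
         rv_pmf Om P (\<lambda>w. (X_rv I w, (Z_rv (- I) w, S_rv w))) (restrict x0 I, (restrict z0 (-I), s0))"
proof -
  have "(\<Prod>k\<in>UNIV. q k (x k) (z0 k)) = (\<Prod>k\<in>I. q k (x0 k) (z0 k)) * (\<Prod>k\<in>-I. q k (x k) (z0 k))"
    if "x \<in> inputs_agreeing x0 I" for x
  proof -
    have "(\<Prod>k\<in>UNIV. q k (x k) (z0 k)) = (\<Prod>k\<in>I. q k (x k) (z0 k)) * (\<Prod>k\<in>-I. q k (x k) (z0 k))"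
      using prod.union_disjoint[of I "-I" "\<lambda>k. q k (x k) (z0 k)"] by simp
    thus ?thesis using that by (simp add: inputs_agreeing_def)
  qed
  thus ?thesis
    unfolding pmf_X_Z_S[OF w] pmf_X_Zc_S[OF w] sum_distrib_left
    by (intro sum.cong refl) (simp add: algebra_simps)
qed

lemma neg_entropy_markov_gap:
  "neg_entropy Om P (\<lambda>w. (X_rv I w, Z_rv I w, (Z_rv (- I) w, S_rv w)))
   - neg_entropy Om P (\<lambda>w. (X_rv I w, (Z_rv (- I) w, S_rv w)))
   = (\<Sum>i\<in>I. channel_log_mean i)"
proof -
  let ?XZS = "\<lambda>w. (X_rv I w, Z_rv I w, (Z_rv (- I) w, S_rv w))"
  let ?XS = "\<lambda>w. (X_rv I w, (Z_rv (- I) w, S_rv w))"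
  have "neg_entropy Om P ?XZS - neg_entropy Om P ?XS
      = (\<Sum>w\<in>Om. P w * (\<Sum>i\<in>I. ln (q i (fst w i) (snd (snd w) i))))"
    unfolding neg_entropy_def sum_subtractf[symmetric]
  proof (intro sum.cong refl)
    fix w assume w: "w \<in> Om"
    obtain x0 s0 z0 where wd: "w = (x0, s0, z0)" by (cases w) auto
    have eq: "?XZS w = (restrict x0 I, restrict z0 I, (restrict z0 (-I), s0))"
      "?XS w = (restrict x0 I, (restrict z0 (-I), s0))"
      by (auto simp: wd X_rv_def Z_rv_def S_rv_def)
    show "P w * ln (rv_pmf Om P ?XZS (?XZS w)) - P w * ln (rv_pmf Om P ?XS (?XS w)) =
          P w * (\<Sum>i\<in>I. ln (q i (fst w i) (snd (snd w) i)))"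
    proof (cases "P w = 0")
      case False
      hence "P w > 0" using P_nonneg[OF w] by simp
      hence pos: "rv_pmf Om P ?XZS (?XZS w) > 0"
        by (intro rv_pmf_pos fin_Om P_nonneg w)
      have fact: "rv_pmf Om P ?XZS (?XZS w) = (\<Prod>k\<in>I. q k (x0 k) (z0 k)) * rv_pmf Om P ?XS (?XS w)"
        unfolding eq by (rule markov_factorization[OF w[unfolded wd]])
      have "(\<Prod>k\<in>I. q k (x0 k) (z0 k)) * rv_pmf Om P ?XS (?XS w) \<noteq> 0"
        using pos unfolding fact by linarith
      hence ne: "(\<Prod>k\<in>I. q k (x0 k) (z0 k)) \<noteq> 0" "rv_pmf Om P ?XS (?XS w) \<noteq> 0"
        by auto
      have "ln (rv_pmf Om P ?XZS (?XZS w)) = ln (\<Prod>k\<in>I. q k (x0 k) (z0 k)) + ln (rv_pmf Om P ?XS (?XS w))"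
        using ne unfolding fact by (simp add: ln_mult)
      moreover have "ln (\<Prod>k\<in>I. q k (x0 k) (z0 k)) = (\<Sum>i\<in>I. ln (q i (x0 i) (z0 i)))"
        using ne(1) by (intro ln_prod) auto
      ultimately have "ln (rv_pmf Om P ?XZS (?XZS w)) - ln (rv_pmf Om P ?XS (?XS w))
           = (\<Sum>i\<in>I. ln (q i (x0 i) (z0 i)))"
        by simp
      thus ?thesis by (simp add: wd right_diff_distrib[symmetric])
    qed simp
  qed
  also have "\<dots> = (\<Sum>i\<in>I. channel_log_mean i)"
    unfolding channel_log_mean_def sum_distrib_left by (rule sum.swap)
  finally show ?thesis .
qed

lemma cmi_bound_formula:
  "cmi_bound I = ((\<Sum>i\<in>I. channel_log_mean i) + neg_ent_ZS (- I) - neg_ent_ZS UNIV) / ln 2"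
proof -
  have "neg_entropy Om P (\<lambda>w. (Z_rv I w, (Z_rv (- I) w, S_rv w))) = neg_ent_ZS UNIV"
    unfolding neg_ent_ZS_def by (rule neg_entropy_cong) (simp add: Z_rv_eq, blast)
  moreover have "cmi_bound I =
    (neg_entropy Om P (\<lambda>w. (X_rv I w, Z_rv I w, (Z_rv (- I) w, S_rv w))) + neg_ent_ZS (- I)
     - neg_entropy Om P (\<lambda>w. (X_rv I w, (Z_rv (- I) w, S_rv w)))
     - neg_entropy Om P (\<lambda>w. (Z_rv I w, (Z_rv (- I) w, S_rv w)))) / ln 2"
    unfolding cmi_bound_def neg_ent_ZS_def by (rule cond_mutual_info_entropies[OF fin_Om P_nonneg])
  ultimately show ?thesis
    using neg_entropy_markov_gap[of I] by (simp add: algebra_simps)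
qed

lemma neg_ent_ZS_supermodular: "neg_ent_ZS U + neg_ent_ZS V \<le> neg_ent_ZS (U \<inter> V) + neg_ent_ZS (U \<union> V)"
proof -
  have "neg_entropy Om P (\<lambda>w. (Z_rv (U - V) w, (Z_rv (U \<inter> V) w, S_rv w)))
      + neg_entropy Om P (\<lambda>w. (Z_rv (V - U) w, (Z_rv (U \<inter> V) w, S_rv w)))
     \<le> neg_entropy Om P (\<lambda>w. (Z_rv (U - V) w, Z_rv (V - U) w, (Z_rv (U \<inter> V) w, S_rv w)))
      + neg_entropy Om P (\<lambda>w. (Z_rv (U \<inter> V) w, S_rv w))"
    by (rule neg_entropy_supermodular[OF fin_Om P_nonneg])
  moreover have "neg_entropy Om P (\<lambda>w. (Z_rv (U - V) w, (Z_rv (U \<inter> V) w, S_rv w))) = neg_ent_ZS U"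
    unfolding neg_ent_ZS_def by (rule neg_entropy_cong) (simp add: Z_rv_eq, blast)
  moreover have "neg_entropy Om P (\<lambda>w. (Z_rv (V - U) w, (Z_rv (U \<inter> V) w, S_rv w))) = neg_ent_ZS V"
    unfolding neg_ent_ZS_def by (rule neg_entropy_cong) (simp add: Z_rv_eq, blast)
  moreover have "neg_entropy Om P (\<lambda>w. (Z_rv (U - V) w, Z_rv (V - U) w, (Z_rv (U \<inter> V) w, S_rv w)))
      = neg_ent_ZS (U \<union> V)"
    unfolding neg_ent_ZS_def by (rule neg_entropy_cong) (simp add: Z_rv_eq, blast)
  ultimately show ?thesis unfolding neg_ent_ZS_def by linarith
qed

(* F is supermodular, since complementation preserves supermodularity. *)
lemma cmi_bound_supermodular: "cmi_bound A + cmi_bound B \<le> cmi_bound (A \<union> B) + cmi_bound (A \<inter> B)"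
proof -
  have "sum channel_log_mean (A \<union> B) + sum channel_log_mean (A \<inter> B)
      = sum channel_log_mean A + sum channel_log_mean B"
    by (rule sum.union_inter) auto
  moreover have "neg_ent_ZS (- A) + neg_ent_ZS (- B) \<le> neg_ent_ZS (- (A \<union> B)) + neg_ent_ZS (- (A \<inter> B))"
    using neg_ent_ZS_supermodular[of "- A" "- B"] by (simp add: Compl_Un Compl_Int)
  ultimately show ?thesis
    unfolding cmi_bound_formula add_divide_distrib[symmetric] by (intro divide_right_mono) auto
qed

lemma cmi_bound_empty: "cmi_bound {} = 0"
  unfolding cmi_bound_formula by simp

end

lemma family_Union_closed:
  assumes "finite S" and "T {}" and "\<And>A B. T A \<Longrightarrow> T B \<Longrightarrow> T (A \<union> B)" and "\<forall>I\<in>S. T I"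
  shows "T (\<Union>S)"
  using assms(1,4) by (induction S rule: finite_induct) (simp_all add: assms(2,3))

lemma family_Inter_closed:
  assumes "finite S" and "T UNIV" and "\<And>A B. T A \<Longrightarrow> T B \<Longrightarrow> T (A \<inter> B)" and "\<forall>I\<in>S. T I"
  shows "T (\<Inter>S)"
  using assms(1,4) by (induction S rule: finite_induct) (simp_all add: assms(2,3))

lemma prefix_downward_closed:
  fixes M :: "'n::finite \<Rightarrow> 'n set"
  assumes self: "\<And>i. i \<in> M i" and mono: "\<And>i j. j \<in> M i \<Longrightarrow> M j \<subseteq> M i"
    and inj: "\<And>i j. i \<noteq> j \<Longrightarrow> M i \<noteq> M j"
    and xs: "distinct xs" "set xs = UNIV" "sorted (map (\<lambda>i. card (M i)) xs)"
    and i: "i \<in> set (take k xs)" and j: "j \<in> M i"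
  shows "j \<in> set (take k xs)"
proof (rule ccontr)
  assume nj: "j \<notin> set (take k xs)"
  obtain l where l: "l < k" "l < length xs" "xs ! l = i"
    using i by (auto simp: in_set_conv_nth)
  obtain m where m: "m < length xs" "xs ! m = j"
    using xs(2) by (metis UNIV_I in_set_conv_nth)
  have "k \<le> m"
    using m nj by (metis in_set_conv_nth length_take min_less_iff_conj not_le_imp_less nth_take)
  hence "card (M i) \<le> card (M j)"
    using sorted_nth_mono[OF xs(3), of l m] l m by simp
  moreover have "i \<noteq> j" using i nj by auto
  hence "M j \<subset> M i" using mono[OF j] inj by blast
  hence "card (M j) < card (M i)" by (intro psubset_card_mono) auto
  ultimately show False by simp
qed

(* A lattice of subsets of a finite set that covers and separates all points contains every
   prefix of some ordering of the points: list them by the size of their minimal members. *)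
lemma lattice_family_maximal_chain:
  fixes T :: "'n::finite set \<Rightarrow> bool"
  assumes empty: "T {}"
    and union: "\<And>A B. T A \<Longrightarrow> T B \<Longrightarrow> T (A \<union> B)"
    and inter: "\<And>A B. T A \<Longrightarrow> T B \<Longrightarrow> T (A \<inter> B)"
    and cover: "\<And>i. \<exists>I. T I \<and> i \<in> I"
    and separate: "\<And>i j. i \<noteq> j \<Longrightarrow> \<exists>I. T I \<and> (i \<in> I) \<noteq> (j \<in> I)"
  shows "\<exists>xs\<in>permutations_of_set UNIV. \<forall>k. T (set (take k xs))"
proof -
  have "\<Union>{I. T I} = UNIV" using cover by blast
  moreover have "T (\<Union>{I. T I})" by (rule family_Union_closed[where T=T]) (use empty union in auto)
  ultimately have univ: "T UNIV" by simp
  define M where "M = (\<lambda>i. \<Inter>{I. T I \<and> i \<in> I})"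
  have M_T: "T (M i)" for i
    unfolding M_def by (rule family_Inter_closed[where T=T]) (use univ inter in auto)
  have self: "i \<in> M i" for i unfolding M_def by auto
  have mono: "j \<in> M i \<Longrightarrow> M j \<subseteq> M i" for i j
    using M_T[of i] unfolding M_def by blast
  have inj: "M i \<noteq> M j" if ij: "i \<noteq> j" for i j
  proof -
    obtain I where I: "T I" "(i \<in> I) \<noteq> (j \<in> I)" using separate[OF ij] by blast
    hence "i \<in> I \<Longrightarrow> M i \<subseteq> I" "j \<in> I \<Longrightarrow> M j \<subseteq> I" unfolding M_def by blast+
    thus ?thesis using I self[of i] self[of j] by blast
  qed
  obtain xs0 :: "'n list" where xs0: "set xs0 = UNIV" "distinct xs0"
    using finite_distinct_list[of "UNIV :: 'n set"] by auto
  define xs where "xs = sort_key (\<lambda>i. card (M i)) xs0"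
  have xs: "distinct xs" "set xs = UNIV" "sorted (map (\<lambda>i. card (M i)) xs)"
    using xs0 by (auto simp: xs_def)
  have "T (set (take k xs))" for k
  proof -
    have "set (take k xs) = \<Union>(M ` set (take k xs))"
      using self prefix_downward_closed[OF self mono inj xs] by blast
    moreover have "T (\<Union>(M ` set (take k xs)))"
      by (rule family_Union_closed[where T=T]) (use M_T empty union in auto)
    ultimately show ?thesis by simp
  qed
  thus ?thesis using xs by (auto simp: permutations_of_set_def)
qed

locale supermodular_set_fn =
  fixes F :: "'n::finite set \<Rightarrow> real"
  assumes F_empty: "F {} = 0"
    and F_super: "\<And>A B. F A + F B \<le> F (A \<union> B) + F (A \<inter> B)"
begin

definition region :: "(real^'n) set" where
  "region = {R. \<forall>I. I \<noteq> {} \<longrightarrow> F I \<le> (\<Sum>i\<in>I. R $ i)}"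

lemma region_ge: "v \<in> region \<Longrightarrow> F I \<le> (\<Sum>i\<in>I. v $ i)"
  unfolding region_def using F_empty by (cases "I = {}") auto

definition tight :: "real^'n \<Rightarrow> 'n set \<Rightarrow> bool" where
  "tight v I \<longleftrightarrow> (\<Sum>i\<in>I. v $ i) = F I"

lemma tight_lattice:
  assumes v: "v \<in> region" and A: "tight v A" and B: "tight v B"
  shows "tight v (A \<union> B)" "tight v (A \<inter> B)"
proof -
  have "(\<Sum>i\<in>A \<union> B. v $ i) + (\<Sum>i\<in>A \<inter> B. v $ i) = (\<Sum>i\<in>A. v $ i) + (\<Sum>i\<in>B. v $ i)"
    by (rule sum.union_inter) auto
  moreover have "F A + F B \<le> F (A \<union> B) + F (A \<inter> B)" by (rule F_super)
  moreover have "F (A \<union> B) \<le> (\<Sum>i\<in>A \<union> B. v $ i)" "F (A \<inter> B) \<le> (\<Sum>i\<in>A \<inter> B. v $ i)"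
    using region_ge[OF v] by auto
  ultimately show "tight v (A \<union> B)" "tight v (A \<inter> B)"
    using A B unfolding tight_def by linarith+
qed

(* If moving along d changes only slack inequalities, v is the midpoint of two points
   v +- e d of the region, so it is not extreme. *)
lemma not_extreme_if_slack:
  fixes d :: "real^'n"
  assumes v: "v \<in> region" and d: "d \<noteq> 0"
    and slack: "\<And>I. (\<Sum>i\<in>I. d $ i) \<noteq> 0 \<Longrightarrow> \<not> tight v I"
  shows "\<not> v extreme_point_of region"
proof
  assume ext: "v extreme_point_of region"
  define K where "K = {I. (\<Sum>i\<in>I. d $ i) \<noteq> 0}"
  define e where "e = Min (insert 1 ((\<lambda>I. ((\<Sum>i\<in>I. v $ i) - F I) / \<bar>\<Sum>i\<in>I. d $ i\<bar>) ` K))"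
  have gap: "F I < (\<Sum>i\<in>I. v $ i)" if "I \<in> K" for I
    using slack[of I] region_ge[OF v, of I] that by (auto simp: K_def tight_def)
  have e_pos: "e > 0" unfolding e_def
    using gap by (subst Min_gr_iff) (auto simp: K_def)
  have e_le: "e * \<bar>\<Sum>i\<in>I. d $ i\<bar> \<le> (\<Sum>i\<in>I. v $ i) - F I" if "I \<in> K" for I
  proof -
    have "e \<le> ((\<Sum>i\<in>I. v $ i) - F I) / \<bar>\<Sum>i\<in>I. d $ i\<bar>"
      unfolding e_def using that by (intro Min_le) auto
    thus ?thesis using that by (simp add: K_def pos_le_divide_eq)
  qed
  have in_region: "v + t *\<^sub>R d \<in> region" if "\<bar>t\<bar> = e" for t
    unfolding region_def
  proof (intro CollectI allI impI)
    fix I :: "'n set"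
    have sum_eq: "(\<Sum>i\<in>I. (v + t *\<^sub>R d) $ i) = (\<Sum>i\<in>I. v $ i) + t * (\<Sum>i\<in>I. d $ i)"
      by (simp add: sum.distrib sum_distrib_left)
    show "F I \<le> (\<Sum>i\<in>I. (v + t *\<^sub>R d) $ i)"
    proof (cases "I \<in> K")
      case True
      hence "\<bar>t * (\<Sum>i\<in>I. d $ i)\<bar> \<le> (\<Sum>i\<in>I. v $ i) - F I"
        using e_le that by (simp add: abs_mult)
      thus ?thesis using sum_eq by linarith
    qed (use region_ge[OF v, of I] sum_eq in \<open>simp add: K_def\<close>)
  qed
  have "v = midpoint (v + e *\<^sub>R d) (v + (- e) *\<^sub>R d)"
    by (simp add: midpoint_def scaleR_add_right[symmetric] flip: scaleR_2)
  moreover have "v + e *\<^sub>R d \<noteq> v + (- e) *\<^sub>R d"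
    using d e_pos by (simp only: add_left_cancel scaleR_cancel_right) simp
  ultimately have "v \<in> open_segment (v + e *\<^sub>R d) (v + (- e) *\<^sub>R d)"
    by (metis midpoint_in_open_segment)
  moreover have "v + e *\<^sub>R d \<in> region" "v + (- e) *\<^sub>R d \<in> region"
    using in_region[of e] in_region[of "- e"] e_pos by auto
  ultimately show False using ext unfolding extreme_point_of_def by blast
qed

(* At an extreme point every index lies in a tight set (otherwise move along e_i) ... *)
lemma extreme_tight_cover:
  assumes ext: "v extreme_point_of region"
  shows "\<exists>I. tight v I \<and> i \<in> I"
proof (rule ccontr)
  assume no: "\<not> (\<exists>I. tight v I \<and> i \<in> I)"
  define d :: "real^'n" where "d = (\<chi> j. if j = i then 1 else 0)"
  have "d \<noteq> 0" by (auto simp: d_def vec_eq_iff)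
  moreover have "\<not> tight v I" if "(\<Sum>j\<in>I. d $ j) \<noteq> 0" for I
    using that no by (auto simp: d_def sum.delta split: if_splits)
  ultimately have "\<not> v extreme_point_of region"
    using ext by (intro not_extreme_if_slack) (auto simp: extreme_point_of_def)
  thus False using ext by simp
qed

(* ... and any two indices are separated by a tight set (otherwise move along e_i - e_j). *)
lemma extreme_tight_separate:
  assumes ext: "v extreme_point_of region" and ij: "i \<noteq> j"
  shows "\<exists>I. tight v I \<and> (i \<in> I) \<noteq> (j \<in> I)"
proof (rule ccontr)
  assume no: "\<not> (\<exists>I. tight v I \<and> (i \<in> I) \<noteq> (j \<in> I))"
  define d :: "real^'n" where "d = (\<chi> l. (if l = i then 1 else 0) - (if l = j then 1 else 0))"
  have "d $ i = 1" using ij by (simp add: d_def)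
  hence "d \<noteq> 0" by auto
  moreover have "\<not> tight v I" if "(\<Sum>l\<in>I. d $ l) \<noteq> 0" for I
  proof -
    have "(\<Sum>l\<in>I. d $ l) = (if i \<in> I then 1 else 0) - (if j \<in> I then 1 else 0)"
      by (simp add: d_def sum_subtractf sum.delta)
    thus ?thesis using that no by (auto split: if_splits)
  qed
  ultimately have "\<not> v extreme_point_of region"
    using ext by (intro not_extreme_if_slack) (auto simp: extreme_point_of_def)
  thus False using ext by simp
qed

lemma extreme_tight_chain:
  assumes ext: "v extreme_point_of region"
  shows "\<exists>xs\<in>permutations_of_set UNIV. \<forall>k. tight v (set (take k xs))"
proof (rule lattice_family_maximal_chain)
  have v: "v \<in> region" using ext by (simp add: extreme_point_of_def)
  show "tight v {}" by (simp add: tight_def F_empty)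
  show "tight v (A \<union> B)" "tight v (A \<inter> B)" if "tight v A" "tight v B" for A B
    using tight_lattice[OF v that] by auto
qed (use extreme_tight_cover[OF ext] extreme_tight_separate[OF ext] in auto)

lemma chain_determines_point:
  assumes xs: "xs \<in> permutations_of_set UNIV"
    and tv: "\<forall>k. tight v (set (take k xs))" and tw: "\<forall>k. tight w (set (take k xs))"
  shows "v = w"
proof -
  have d: "distinct xs" and s: "set xs = UNIV" using xs by (auto simp: permutations_of_set_def)
  have eq: "(\<Sum>i\<in>set (take k xs). v $ i) = (\<Sum>i\<in>set (take k xs). w $ i)" for k
    using tv tw by (simp add: tight_def)
  have "v $ (xs ! l) = w $ (xs ! l)" if l: "l < length xs" for l
  proof -
    have "set (take (Suc l) xs) = insert (xs ! l) (set (take l xs))"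
      using l by (simp add: take_Suc_conv_app_nth)
    moreover have "xs ! l \<notin> set (take l xs)"
      using d l by (metis distinct_take id_take_nth_drop not_distinct_conv_prefix)
    ultimately show ?thesis using eq[of "Suc l"] eq[of l] by simp
  qed
  thus ?thesis using s by (simp add: vec_eq_iff) (metis UNIV_I in_set_conv_nth)
qed

theorem extreme_points_card:
  "finite {v. v extreme_point_of region} \<and> card {v. v extreme_point_of region} \<le> fact CARD('n)"
proof -
  define E where "E = {v. v extreme_point_of region}"
  define chain where "chain = (\<lambda>v. SOME xs. xs \<in> permutations_of_set (UNIV :: 'n set)
                                        \<and> (\<forall>k. tight v (set (take k xs))))"
  have chain: "chain v \<in> permutations_of_set UNIV \<and> (\<forall>k. tight v (set (take k (chain v))))"
    if "v \<in> E" for v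
    unfolding chain_def by (rule someI_ex) (use extreme_tight_chain that in \<open>auto simp: E_def\<close>)
  have inj: "inj_on chain E"
    by (rule inj_onI) (metis chain chain_determines_point)
  have into: "chain ` E \<subseteq> permutations_of_set UNIV" using chain by auto
  have "finite E" using inj_on_finite[OF inj into] by simp
  moreover have "card E \<le> card (permutations_of_set (UNIV :: 'n set))"
    using card_inj_on_le[OF inj into] by simp
  ultimately show ?thesis by (simp add: E_def)
qed

end

(* The statement: B* is the region of the supermodular function F = cmi_bound. *)
theorem lemma3:
  fixes XA :: "'n::finite \<Rightarrow> 'x set" and SA :: "'s set" and ZA :: "'n \<Rightarrow> 'z set"
    and p :: "('n \<Rightarrow> 'x) \<Rightarrow> 's \<Rightarrow> real" and q :: "'n \<Rightarrow> 'x \<Rightarrow> 'z \<Rightarrow> real"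
  assumes fin_X: "\<And>i. finite (XA i)" and fin_S: "finite SA" and fin_Z: "\<And>i. finite (ZA i)"
    and p_nonneg: "\<And>x s. (\<forall>i. x i \<in> XA i) \<Longrightarrow> s \<in> SA \<Longrightarrow> p x s \<ge> 0"
    and p_sum: "(\<Sum>(x, s)\<in>{(x, s). (\<forall>i. x i \<in> XA i) \<and> s \<in> SA}. p x s) = 1"
    and q_nonneg: "\<And>k x z. x \<in> XA k \<Longrightarrow> z \<in> ZA k \<Longrightarrow> q k x z \<ge> 0"
    and q_sum: "\<And>k x. x \<in> XA k \<Longrightarrow> (\<Sum>z\<in>ZA k. q k x z) = 1"
    and nondeg: "nondegenerate XA SA ZA p q"
  shows "finite {v. v extreme_point_of B_star XA SA ZA p q}
         \<and> card {v. v extreme_point_of B_star XA SA ZA p q} \<le> fact CARD('n)"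
proof -
  interpret model: channel_model XA SA ZA p q
    by unfold_locales (use fin_X fin_S fin_Z p_nonneg q_nonneg q_sum in auto)
  interpret F: supermodular_set_fn model.cmi_bound
    by unfold_locales (rule model.cmi_bound_empty, rule model.cmi_bound_supermodular)
  have "B_star XA SA ZA p q = F.region"
    unfolding B_star_def F.region_def model.cmi_bound_def ..
  thus ?thesis using F.extreme_points_card by simp
qed

end
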